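(* In the setting of the context, for every integer $m\ge 0$ there is a constant $C_m$ (depending on $m$ and on $p$, but not on $N$) such that for all $N\ge 1$, \[ |M_{2m+1}(N)| \;\le\; \frac{C_m}{\sqrt N}. \] In particular $\lim_{N\to\infty} M_{2m+1}(N)=0$.
   Context: Let $p$ be a probability density on $\mathbb{R}$ with mean $0$, variance $1$ and finite moments of all orders. For $N\ge 1$, let $b_1,\dots,b_{N-1}$ be independent random variables with density $p$, set $b_0=0$, and let $A=A_N$ be the $N\times N$ real symmetric Toeplitz matrix with entries $a_{ij}=b_{|i-j|}$ ($1\le i,j\le N$). Let $\lambda_1(A),\dots,\lambda_N(A)$ be its eigenvalues. For an integer $k\ge 0$ define $M_k(A,N)=N^{-(k/2+1)}\sum_{i=1}^N\lambda_i(A)^k = N^{-(k/2+1)}\,\mathrm{Trace}(A^k)$, and $M_k(N)=\mathbb{E}[M_k(A,N)]$, the expectation over the random entries. *)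

theory Defs
  imports "HOL-Probability.Probability" "Jordan_Normal_Form.Matrix"
begin

definition mat_trace :: "real mat \<Rightarrow> real" where
  "mat_trace A = (\<Sum>i<dim_row A. A $$ (i, i))"

text \<open>The N x N symmetric Toeplitz matrix with entries b_{|i-j|}, where b_0 = 0
  (indices are 0-based here; |i-j| is unaffected).\<close>
definition toeplitz_mat :: "nat \<Rightarrow> (nat \<Rightarrow> real) \<Rightarrow> real mat" where
  "toeplitz_mat N b = mat N N (\<lambda>(i, j). if i = j then 0 else b (nat \<bar>int i - int j\<bar>))"

definition entries_law :: "(real \<Rightarrow> real) \<Rightarrow> nat \<Rightarrow> (nat \<Rightarrow> real) measure" where
  "entries_law p N = PiM {1..N-1} (\<lambda>_. density lborel p)"

definition M_AN :: "nat \<Rightarrow> nat \<Rightarrow> (nat \<Rightarrow> real) \<Rightarrow> real" where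
  "M_AN k N b = real N powr (- (real k / 2 + 1)) * mat_trace (toeplitz_mat N b ^\<^sub>m k)"

definition M_N :: "(real \<Rightarrow> real) \<Rightarrow> nat \<Rightarrow> nat \<Rightarrow> real" where
  "M_N p k N = (\<integral>b. M_AN k N b \<partial>(entries_law p N))"

end

theory Submission
  imports Defs "HOL-Real_Asymp.Real_Asymp"
begin

(* Trace(A^k) is a sum over closed walks x_0, ..., x_k in {0..N-1} of the products of the entries
   b_|x_(t+1) - x_t| along the walk (zero as soon as a step has length 0).  If some step length
   occurs exactly once in a walk, the corresponding entry occurs linearly and is independent of the
   other factors, so by Fubini and mean zero the expectation of that term vanishes.  In the
   remaining walks every one of the k = 2m+1 step lengths is repeated, so at most m distinct lengths
   occur; such a walk is determined by its start, its step signs and its step lengths, which leaves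
   at most N^(m+1) 2^k m^k walks.  Each term has expectation at most k E|b|^k in absolute value, and
   N^-(k/2+1) N^(m+1) = N^(-1/2). *)

section \<open>Matrix powers as sums over walks\<close>

definition walks :: "nat \<Rightarrow> nat \<Rightarrow> (nat \<Rightarrow> nat) set" where
  "walks N k = {..k} \<rightarrow>\<^sub>E {..<N}"

definition closed_walks :: "nat \<Rightarrow> nat \<Rightarrow> (nat \<Rightarrow> nat) set" where
  "closed_walks N k = {x \<in> walks N k. x k = x 0}"

definition walk_weight :: "'a::comm_semiring_1 mat \<Rightarrow> nat \<Rightarrow> (nat \<Rightarrow> nat) \<Rightarrow> 'a" where
  "walk_weight A k x = (\<Prod>t<k. A $$ (x t, x (Suc t)))"

lemma finite_walks [simp]: "finite (walks N k)"
  by (simp add: walks_def finite_PiE)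

lemma finite_closed_walks [simp]: "finite (closed_walks N k)"
  by (simp add: closed_walks_def)

lemma walks_less: "x \<in> walks N k \<Longrightarrow> t \<le> k \<Longrightarrow> x t < N"
  by (auto simp: walks_def)

lemma walks_undefined: "x \<in> walks N k \<Longrightarrow> k < t \<Longrightarrow> x t = undefined"
  by (auto simp: walks_def PiE_def extensional_def)

lemma pow_mat_entry_walks:
  assumes A: "A \<in> carrier_mat N N" and "i < N" "j < N"
  shows "(A ^\<^sub>m k) $$ (i, j) = (\<Sum>x\<in>{x \<in> walks N k. x 0 = i \<and> x k = j}. walk_weight A k x)"
  using \<open>j < N\<close>
proof (induction k arbitrary: j)
  case 0
  have "{x \<in> walks N 0. x 0 = i \<and> x 0 = j} = (if i = j then {\<lambda>t\<in>{..0}. i} else {})"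
    using \<open>i < N\<close> 0 by (auto simp: walks_def PiE_iff extensional_def fun_eq_iff)
  then show ?case using 0 A \<open>i < N\<close> by (simp add: walk_weight_def)
next
  case (Suc k)
  let ?W = "\<lambda>l. {x \<in> walks N k. x 0 = i \<and> x k = l}"
  have "(A ^\<^sub>m Suc k) $$ (i, j) = (\<Sum>l<N. (A ^\<^sub>m k) $$ (i, l) * A $$ (l, j))"
    using A \<open>i < N\<close> Suc.prems by (simp add: scalar_prod_def atLeast0LessThan)
  also have "\<dots> = (\<Sum>l<N. \<Sum>y\<in>?W l. walk_weight A k y * A $$ (l, j))"
    using Suc.IH by (simp add: sum_distrib_right)
  also have "\<dots> = (\<Sum>(l, y)\<in>Sigma {..<N} ?W. walk_weight A k y * A $$ (l, j))"
    by (rule sum.Sigma) auto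
  also have "\<dots> = (\<Sum>x\<in>{x \<in> walks N (Suc k). x 0 = i \<and> x (Suc k) = j}. walk_weight A (Suc k) x)"
  proof (rule sum.reindex_bij_witness[where i = "\<lambda>x. (x k, x(Suc k := undefined))"
        and j = "\<lambda>(l, y). y(Suc k := j)"])
    fix x assume x: "x \<in> {x \<in> walks N (Suc k). x 0 = i \<and> x (Suc k) = j}"
    then show "(case (x k, x(Suc k := undefined)) of (l, y) \<Rightarrow> y(Suc k := j)) = x"
      by auto
    show "(x k, x(Suc k := undefined)) \<in> Sigma {..<N} ?W"
      using x by (auto simp: walks_def PiE_iff extensional_def)
  next
    fix ly assume "ly \<in> Sigma {..<N} ?W"
    then obtain l y where ly: "ly = (l, y)" "l < N" "y \<in> walks N k" "y 0 = i" "y k = l"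
      by auto
    have "y (Suc k) = undefined" using ly walks_undefined by blast
    then show "(case (case ly of (l, y) \<Rightarrow> y(Suc k := j)) of x \<Rightarrow> (x k, x(Suc k := undefined))) = ly"
      using ly by (auto simp: fun_eq_iff)
    show "(case ly of (l, y) \<Rightarrow> y(Suc k := j)) \<in> {x \<in> walks N (Suc k). x 0 = i \<and> x (Suc k) = j}"
      using ly Suc.prems by (auto simp: walks_def PiE_iff extensional_def)
    show "walk_weight A (Suc k) (case ly of (l, y) \<Rightarrow> y(Suc k := j))
        = (case ly of (l, y) \<Rightarrow> walk_weight A k y * A $$ (l, j))"
      using ly by (simp add: walk_weight_def)
  qed
  finally show ?case .
qed

lemma sum_diag_pow_mat_closed_walks:
  assumes A: "A \<in> carrier_mat N N"
  shows "(\<Sum>i<N. (A ^\<^sub>m k) $$ (i, i)) = (\<Sum>x\<in>closed_walks N k. walk_weight A k x)"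
proof -
  have "closed_walks N k = (\<Union>i<N. {x \<in> walks N k. x 0 = i \<and> x k = i})"
    by (auto simp: closed_walks_def walks_less)
  then show ?thesis
    by (simp add: pow_mat_entry_walks[OF A], subst sum.UNION_disjoint) auto
qed

definition toeplitz_coeff :: "(nat \<Rightarrow> real) \<Rightarrow> nat \<Rightarrow> real" where
  "toeplitz_coeff b d = (if d = 0 then 0 else b d)"

definition step_length :: "(nat \<Rightarrow> nat) \<Rightarrow> nat \<Rightarrow> nat" where
  "step_length x t = nat \<bar>int (x (Suc t)) - int (x t)\<bar>"

lemma trace_pow_toeplitz_mat:
  "mat_trace (toeplitz_mat N b ^\<^sub>m k)
     = (\<Sum>x\<in>closed_walks N k. \<Prod>t<k. toeplitz_coeff b (step_length x t))"
proof -
  have "walk_weight (toeplitz_mat N b) k x = (\<Prod>t<k. toeplitz_coeff b (step_length x t))"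
    if "x \<in> closed_walks N k" for x
    using that walks_less[of x N k]
    by (auto simp: closed_walks_def walk_weight_def toeplitz_mat_def toeplitz_coeff_def
        step_length_def abs_minus_commute intro!: prod.cong)
  then show ?thesis
    by (simp add: mat_trace_def sum_diag_pow_mat_closed_walks toeplitz_mat_def)
qed

section \<open>Counting walks with repeated step lengths\<close>

lemma two_mul_card_image_le:
  assumes "finite A" and "\<And>a. a \<in> A \<Longrightarrow> \<exists>a'\<in>A. a' \<noteq> a \<and> f a' = f a"
  shows "2 * card (f ` A) \<le> card A"
proof -
  have "card A = (\<Sum>s\<in>f ` A. card {a \<in> A. f a = s})"
    unfolding card_eq_sum by (rule sum.image_gen[OF \<open>finite A\<close>])
  moreover have "2 \<le> card {a \<in> A. f a = s}" if "s \<in> f ` A" for s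
  proof -
    obtain a where a: "a \<in> A" "f a = s" using \<open>s \<in> f ` A\<close> by auto
    then obtain a' where "a' \<in> A" "a' \<noteq> a" "f a' = s" using assms(2) by blast
    then have "card {a, a'} \<le> card {a \<in> A. f a = s}"
      using a \<open>finite A\<close> by (intro card_mono) auto
    then show ?thesis using \<open>a' \<noteq> a\<close> by simp
  qed
  ultimately show ?thesis
    using sum_mono[of "f ` A" "\<lambda>_. 2::nat"] by (simp add: mult.commute)
qed

lemma card_functions_small_image_le:
  assumes "finite A" "finite B" "B \<noteq> {}"
  shows "card {f \<in> A \<rightarrow>\<^sub>E B. card (f ` A) \<le> m} \<le> m ^ card A * card B ^ m"
proof -
  let ?compose = "\<lambda>(r, w). \<lambda>a\<in>A. w (r a)"
  let ?P = "(A \<rightarrow>\<^sub>E {..<m}) \<times> ({..<m} \<rightarrow>\<^sub>E B)"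
  have "{f \<in> A \<rightarrow>\<^sub>E B. card (f ` A) \<le> m} \<subseteq> ?compose ` ?P"
  proof
    fix f assume f: "f \<in> {f \<in> A \<rightarrow>\<^sub>E B. card (f ` A) \<le> m}"
    let ?n = "card (f ` A)"
    obtain h where h: "bij_betw h {..<?n} (f ` A)"
      using ex_bij_betw_nat_finite[of "f ` A"] \<open>finite A\<close> by (auto simp: atLeast0LessThan)
    obtain b0 where "b0 \<in> B" using \<open>B \<noteq> {}\<close> by auto
    define r where "r = (\<lambda>a\<in>A. inv_into {..<?n} h (f a))"
    define w where "w = (\<lambda>i\<in>{..<m}. if i < ?n then h i else b0)"
    have r: "r a < ?n" "h (r a) = f a" if "a \<in> A" for a
    proof -
      have fa: "f a \<in> h ` {..<?n}" using that h by (simp add: bij_betw_def)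
      then have "inv_into {..<?n} h (f a) \<in> {..<?n}" by (rule inv_into_into)
      then show "r a < ?n" using that by (simp add: r_def)
      show "h (r a) = f a" using that fa by (simp add: r_def f_inv_into_f)
    qed
    have "r \<in> A \<rightarrow>\<^sub>E {..<m}"
      using r(1) f by (auto simp: r_def intro: order_less_le_trans)
    moreover have "w \<in> {..<m} \<rightarrow>\<^sub>E B"
    proof -
      have "f ` A \<subseteq> B" using f by (auto simp: PiE_iff)
      then have "h i \<in> B" if "i < ?n" for i
        using that bij_betw_apply[OF h] by blast
      then show ?thesis using \<open>b0 \<in> B\<close> by (simp add: w_def)
    qed
    moreover have "f = ?compose (r, w)"
    proof
      fix a
      show "f a = ?compose (r, w) a"
      proof (cases "a \<in> A")
        case True
        then have "r a < m" using r(1) f by (auto intro: order_less_le_trans)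
        then show ?thesis using True r by (simp add: w_def)
      qed (use f in \<open>auto simp: PiE_iff extensional_def\<close>)
    qed
    ultimately show "f \<in> ?compose ` ?P"
      by (intro image_eqI[of f _ "(r, w)"]) simp_all
  qed
  then have "card {f \<in> A \<rightarrow>\<^sub>E B. card (f ` A) \<le> m} \<le> card (?compose ` ?P)"
    using assms by (intro card_mono) (simp_all add: finite_PiE)
  also have "\<dots> \<le> card ?P"
    using assms by (intro card_image_le) (simp add: finite_PiE)
  finally show ?thesis
    using assms by (simp add: card_cartesian_product card_PiE)
qed

definition step_sign :: "(nat \<Rightarrow> nat) \<Rightarrow> nat \<Rightarrow> int" where
  "step_sign x t = (if x t \<le> x (Suc t) then 1 else -1)"

lemma step_sign_mult_step_length:
  "step_sign x t * int (step_length x t) = int (x (Suc t)) - int (x t)"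
  by (simp add: step_sign_def step_length_def)

lemma step_length_less: "x \<in> walks N k \<Longrightarrow> t < k \<Longrightarrow> step_length x t < N"
  using walks_less[of x N k t] walks_less[of x N k "Suc t"] by (simp add: step_length_def)

lemma walks_eqI:
  assumes x: "x \<in> walks N k" and y: "y \<in> walks N k" and "x 0 = y 0"
    and "\<And>t. t < k \<Longrightarrow> step_sign x t = step_sign y t"
    and "\<And>t. t < k \<Longrightarrow> step_length x t = step_length y t"
  shows "x = y"
proof
  fix t
  show "x t = y t"
  proof (cases "t \<le> k")
    case True
    then show ?thesis
    proof (induction t)
      case (Suc t)
      have "int (x (Suc t)) - int (x t) = int (y (Suc t)) - int (y t)"
        using assms(4,5) Suc.prems by (simp flip: step_sign_mult_step_length)
      with Suc show ?case by simp
    qed (simp add: \<open>x 0 = y 0\<close>)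
  qed (simp add: walks_undefined[OF x] walks_undefined[OF y])
qed

definition repeated_steps :: "nat \<Rightarrow> (nat \<Rightarrow> nat) \<Rightarrow> bool" where
  "repeated_steps k x \<longleftrightarrow> (\<forall>t<k. \<exists>t'<k. t' \<noteq> t \<and> step_length x t' = step_length x t)"

lemma card_walks_repeated_steps_le:
  "card {x \<in> walks N k. repeated_steps k x} \<le> N * 2 ^ k * ((k div 2) ^ k * N ^ (k div 2))"
proof (cases "N = 0")
  case True
  then have "walks N k = {}" by (auto simp: walks_def PiE_eq_empty_iff)
  then show ?thesis by simp
next
  case False
  let ?m = "k div 2"
  let ?R = "{x \<in> walks N k. repeated_steps k x}"
  let ?D = "{d \<in> {..<k} \<rightarrow>\<^sub>E {..<N}. card (d ` {..<k}) \<le> ?m}"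
  let ?code = "\<lambda>x. (x 0, \<lambda>t\<in>{..<k}. step_sign x t, \<lambda>t\<in>{..<k}. step_length x t)"
  have "inj_on ?code ?R"
  proof (rule inj_onI)
    fix x y assume "x \<in> ?R" "y \<in> ?R" and code: "?code x = ?code y"
    show "x = y"
    proof (rule walks_eqI[of x N k y])
      fix t assume "t < k"
      have "restrict (step_sign x) {..<k} t = restrict (step_sign y) {..<k} t"
        "restrict (step_length x) {..<k} t = restrict (step_length y) {..<k} t"
        using code by simp_all
      then show "step_sign x t = step_sign y t" "step_length x t = step_length y t"
        using \<open>t < k\<close> by simp_all
    qed (use \<open>x \<in> ?R\<close> \<open>y \<in> ?R\<close> code in simp_all)
  qed
  moreover have "?code ` ?R \<subseteq> {..<N} \<times> ({..<k} \<rightarrow>\<^sub>E {-1, 1}) \<times> ?D"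
  proof (rule image_subsetI)
    fix x assume "x \<in> ?R"
    then have "x \<in> walks N k" "repeated_steps k x" by simp_all
    have "2 * card (step_length x ` {..<k}) \<le> card {..<k}"
      using \<open>repeated_steps k x\<close> by (intro two_mul_card_image_le) (auto simp: repeated_steps_def)
    then have "card ((\<lambda>t\<in>{..<k}. step_length x t) ` {..<k}) \<le> ?m" by simp
    then show "?code x \<in> {..<N} \<times> ({..<k} \<rightarrow>\<^sub>E {-1, 1}) \<times> ?D"
      using \<open>x \<in> walks N k\<close> by (auto simp: walks_less step_length_less step_sign_def)
  qed
  ultimately have "card ?R \<le> card ({..<N} \<times> ({..<k} \<rightarrow>\<^sub>E {-1::int, 1}) \<times> ?D)"
    by (intro card_inj_on_le) (auto simp: finite_PiE)
  also have "\<dots> \<le> N * 2 ^ k * (?m ^ k * N ^ ?m)"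
  proof -
    have "card ?D \<le> ?m ^ k * N ^ ?m"
      using False by (intro card_functions_small_image_le[of "{..<k}" "{..<N}" ?m, simplified]) auto
    then show ?thesis by (simp add: card_cartesian_product card_PiE numeral_2_eq_2)
  qed
  finally show ?thesis .
qed

section \<open>Expectations under independent entries\<close>

lemma abs_prod_le_sum_power:
  fixes a :: "nat \<Rightarrow> real"
  assumes "1 \<le> k"
  shows "\<bar>\<Prod>t<k. a t\<bar> \<le> (\<Sum>t<k. \<bar>a t\<bar> ^ k)"
proof -
  let ?max = "Max ((\<lambda>t. \<bar>a t\<bar>) ` {..<k})"
  have "?max \<in> (\<lambda>t. \<bar>a t\<bar>) ` {..<k}" using assms by (intro Max_in) (auto simp: lessThan_empty_iff)
  then obtain t0 where "t0 < k" "\<bar>a t0\<bar> = ?max" by auto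
  then have t0: "t0 < k" "\<And>t. t < k \<Longrightarrow> \<bar>a t\<bar> \<le> \<bar>a t0\<bar>" by auto
  have "\<bar>\<Prod>t<k. a t\<bar> = (\<Prod>t<k. \<bar>a t\<bar>)" by (simp add: abs_prod)
  also have "\<dots> \<le> (\<Prod>t<k. \<bar>a t0\<bar>)" using t0(2) by (intro prod_mono) auto
  also have "\<dots> = \<bar>a t0\<bar> ^ k" by simp
  also have "\<dots> \<le> (\<Sum>t<k. \<bar>a t\<bar> ^ k)" using t0(1) by (intro member_le_sum) auto
  finally show ?thesis .
qed

lemma powr_odd_scaling:
  fixes x :: real
  assumes "0 < x"
  shows "x powr - (real (2 * m + 1) / 2 + 1) * x ^ (m + 1) = 1 / sqrt x"
proof -
  have "x powr - (real (2 * m + 1) / 2 + 1) * x ^ (m + 1)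
      = x powr (- (real (2 * m + 1) / 2 + 1) + real (m + 1))"
    using assms by (simp only: powr_realpow[symmetric] powr_add)
  also have "\<dots> = x powr - (1 / 2)" by (simp add: field_simps)
  also have "\<dots> = 1 / sqrt x" using assms by (simp add: powr_minus_divide powr_half_sqrt)
  finally show ?thesis .
qed

context
  fixes M :: "real measure"
  assumes prob_M: "prob_space M"
    and sets_M: "sets M = sets borel"
    and moments_M: "\<And>n. integrable M (\<lambda>y. \<bar>y\<bar> ^ n)"
    and mean_M: "(\<integral>y. y \<partial>M) = 0"
begin

lemma
  fixes g :: "real \<Rightarrow> real"
  assumes "v \<in> I" and "g \<in> borel_measurable borel"
  shows integrable_PiM_coordinate: "integrable M g \<Longrightarrow> integrable (PiM I (\<lambda>_. M)) (\<lambda>b. g (b v))"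
    and integral_PiM_coordinate: "(\<integral>b. g (b v) \<partial>PiM I (\<lambda>_. M)) = (\<integral>y. g y \<partial>M)"
proof -
  have v: "(\<lambda>b. b v) \<in> measurable (PiM I (\<lambda>_. M)) M"
    using \<open>v \<in> I\<close> by (rule measurable_component_singleton)
  have law: "distr (PiM I (\<lambda>_. M)) M (\<lambda>b. b v) = M"
    using \<open>v \<in> I\<close> prob_M by (intro distr_PiM_component) auto
  have g: "g \<in> borel_measurable M"
    using assms(2) sets_M by (simp cong: measurable_cong_sets)
  show "integrable M g \<Longrightarrow> integrable (PiM I (\<lambda>_. M)) (\<lambda>b. g (b v))"
    using integrable_distr_eq[OF v g] law by simp
  show "(\<integral>b. g (b v) \<partial>PiM I (\<lambda>_. M)) = (\<integral>y. g y \<partial>M)"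
    using integral_distr[OF v g] law by simp
qed

lemma toeplitz_coeff_measurable:
  "d \<in> insert 0 I \<Longrightarrow> (\<lambda>b. toeplitz_coeff b d) \<in> borel_measurable (PiM I (\<lambda>_. M))"
  using measurable_component_singleton[of d I "\<lambda>_. M"] sets_M
  by (auto simp: toeplitz_coeff_def cong: measurable_cong_sets)

lemma toeplitz_coeff_power_eq_coordinate:
  assumes "d \<in> insert 0 I" and "1 \<le> n"
  shows "(\<lambda>b. \<bar>toeplitz_coeff b d\<bar> ^ n) = (if d = 0 then (\<lambda>_. 0) else (\<lambda>b. \<bar>b d\<bar> ^ n))"
  using assms by (auto simp: toeplitz_coeff_def power_0_left)

lemma integrable_toeplitz_coeff_power:
  assumes "d \<in> insert 0 I" and "1 \<le> n"
  shows "integrable (PiM I (\<lambda>_. M)) (\<lambda>b. \<bar>toeplitz_coeff b d\<bar> ^ n)"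
  using assms integrable_PiM_coordinate[OF _ _ moments_M]
  by (auto simp: toeplitz_coeff_power_eq_coordinate)

lemma integral_toeplitz_coeff_power_le:
  assumes "d \<in> insert 0 I" and "1 \<le> n"
  shows "(\<integral>b. \<bar>toeplitz_coeff b d\<bar> ^ n \<partial>PiM I (\<lambda>_. M)) \<le> (\<integral>y. \<bar>y\<bar> ^ n \<partial>M)"
  using assms integral_PiM_coordinate[of d I "\<lambda>y. \<bar>y\<bar> ^ n"]
  by (auto simp: toeplitz_coeff_power_eq_coordinate)

lemma integrable_prod_toeplitz_coeff:
  fixes d :: "nat \<Rightarrow> nat" and k :: nat
  assumes d: "\<And>t. t < k \<Longrightarrow> d t \<in> insert 0 I" and "1 \<le> k"
  shows "integrable (PiM I (\<lambda>_. M)) (\<lambda>b. \<Prod>t<k. toeplitz_coeff b (d t))"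
proof (rule Bochner_Integration.integrable_bound)
  show "integrable (PiM I (\<lambda>_. M)) (\<lambda>b. \<Sum>t<k. \<bar>toeplitz_coeff b (d t)\<bar> ^ k)"
    using d \<open>1 \<le> k\<close> by (intro Bochner_Integration.integrable_sum integrable_toeplitz_coeff_power) auto
  show "(\<lambda>b. \<Prod>t<k. toeplitz_coeff b (d t)) \<in> borel_measurable (PiM I (\<lambda>_. M))"
    using d by (intro borel_measurable_prod toeplitz_coeff_measurable) auto
  show "AE b in PiM I (\<lambda>_. M). norm (\<Prod>t<k. toeplitz_coeff b (d t))
      \<le> norm (\<Sum>t<k. \<bar>toeplitz_coeff b (d t)\<bar> ^ k)"
    using abs_prod_le_sum_power[OF \<open>1 \<le> k\<close>] by (intro AE_I2) (auto intro: order_trans[OF _ abs_ge_self])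
qed

lemma abs_integral_prod_toeplitz_coeff_le:
  fixes d :: "nat \<Rightarrow> nat" and k :: nat
  assumes d: "\<And>t. t < k \<Longrightarrow> d t \<in> insert 0 I" and "1 \<le> k"
  shows "\<bar>\<integral>b. (\<Prod>t<k. toeplitz_coeff b (d t)) \<partial>PiM I (\<lambda>_. M)\<bar> \<le> k * (\<integral>y. \<bar>y\<bar> ^ k \<partial>M)"
proof -
  let ?P = "PiM I (\<lambda>_. M)"
  have powers: "integrable ?P (\<lambda>b. \<bar>toeplitz_coeff b (d t)\<bar> ^ k)" if "t < k" for t
    using d[OF that] \<open>1 \<le> k\<close> by (rule integrable_toeplitz_coeff_power)
  have "\<bar>\<integral>b. (\<Prod>t<k. toeplitz_coeff b (d t)) \<partial>?P\<bar> \<le> (\<integral>b. \<bar>\<Prod>t<k. toeplitz_coeff b (d t)\<bar> \<partial>?P)"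
    by (rule integral_abs_bound)
  also have "\<dots> \<le> (\<integral>b. (\<Sum>t<k. \<bar>toeplitz_coeff b (d t)\<bar> ^ k) \<partial>?P)"
    using integrable_prod_toeplitz_coeff[OF d \<open>1 \<le> k\<close>] powers abs_prod_le_sum_power[OF \<open>1 \<le> k\<close>]
    by (intro Bochner_Integration.integral_mono) auto
  also have "\<dots> = (\<Sum>t<k. \<integral>b. \<bar>toeplitz_coeff b (d t)\<bar> ^ k \<partial>?P)"
    using powers by (intro Bochner_Integration.integral_sum) auto
  also have "\<dots> \<le> (\<Sum>t<k. \<integral>y. \<bar>y\<bar> ^ k \<partial>M)"
    using d \<open>1 \<le> k\<close> by (intro sum_mono integral_toeplitz_coeff_power_le) auto
  finally show ?thesis by simp
qed

lemma integral_PiM_eq_0_if_linear_in_coordinate: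
  assumes "finite I" "v \<in> I" and f: "integrable (PiM I (\<lambda>_. M)) f"
    and linear: "\<And>b y. f (b(v := y)) = y * h b"
  shows "(\<integral>b. f b \<partial>PiM I (\<lambda>_. M)) = 0"
proof -
  interpret product_sigma_finite "\<lambda>_. M"
    using prob_M by (simp add: product_sigma_finite_def prob_space_imp_sigma_finite)
  define J where "J = I - {v}"
  have I: "I = insert v J" "finite J" "v \<notin> J" using assms(1,2) by (auto simp: J_def)
  have "(\<integral>b. f b \<partial>PiM I (\<lambda>_. M)) = (\<integral>b. (\<integral>y. f (b(v := y)) \<partial>M) \<partial>PiM J (\<lambda>_. M))"
    unfolding I(1) using I(2,3) f[unfolded I(1)] by (rule product_integral_insert)
  also have "\<dots> = (\<integral>b. (\<integral>y. y \<partial>M) * h b \<partial>PiM J (\<lambda>_. M))"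
    by (simp add: linear)
  finally show ?thesis by (simp add: mean_M)
qed

lemma integral_prod_toeplitz_coeff_eq_0:
  fixes d :: "nat \<Rightarrow> nat" and k :: nat
  assumes "finite I" and d: "\<And>t. t < k \<Longrightarrow> d t \<in> insert 0 I" and "t0 < k"
    and unique: "\<And>t. t < k \<Longrightarrow> t \<noteq> t0 \<Longrightarrow> d t \<noteq> d t0"
  shows "(\<integral>b. (\<Prod>t<k. toeplitz_coeff b (d t)) \<partial>PiM I (\<lambda>_. M)) = 0"
proof (cases "d t0 = 0")
  case True
  then have "(\<lambda>b. \<Prod>t<k. toeplitz_coeff b (d t)) = (\<lambda>_. 0)"
    using \<open>t0 < k\<close> by (intro ext prod_zero) (auto simp: toeplitz_coeff_def intro!: bexI[of _ t0])
  then show ?thesis by simp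
next
  case False
  let ?rest = "\<lambda>b. \<Prod>t\<in>{..<k} - {t0}. toeplitz_coeff b (d t)"
  show ?thesis
  proof (rule integral_PiM_eq_0_if_linear_in_coordinate)
    show "d t0 \<in> I" using d[OF \<open>t0 < k\<close>] False by simp
    show "integrable (PiM I (\<lambda>_. M)) (\<lambda>b. \<Prod>t<k. toeplitz_coeff b (d t))"
      using d \<open>t0 < k\<close> by (intro integrable_prod_toeplitz_coeff) auto
    fix b y
    have "?rest (b(d t0 := y)) = ?rest b"
      using unique by (intro prod.cong) (auto simp: toeplitz_coeff_def)
    then show "(\<Prod>t<k. toeplitz_coeff (b(d t0 := y)) (d t)) = y * ?rest b"
      using \<open>t0 < k\<close> False by (simp add: prod.remove[of "{..<k}" t0] toeplitz_coeff_def)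
  qed fact
qed

lemma abs_integral_trace_pow_toeplitz_mat_le:
  assumes "1 \<le> k"
  shows "\<bar>\<integral>b. mat_trace (toeplitz_mat N b ^\<^sub>m k) \<partial>PiM {1..N-1} (\<lambda>_. M)\<bar>
    \<le> card {x \<in> walks N k. repeated_steps k x} * (k * (\<integral>y. \<bar>y\<bar> ^ k \<partial>M))"
proof -
  let ?P = "PiM {1..N-1} (\<lambda>_. M)"
  let ?E = "\<lambda>x. \<integral>b. (\<Prod>t<k. toeplitz_coeff b (step_length x t)) \<partial>?P"
  let ?R = "{x \<in> closed_walks N k. repeated_steps k x}"
  have lengths: "step_length x t \<in> insert 0 {1..N-1}" if "x \<in> closed_walks N k" "t < k" for x t
    using that step_length_less[of x N k t] by (auto simp: closed_walks_def)
  have "(\<integral>b. mat_trace (toeplitz_mat N b ^\<^sub>m k) \<partial>?P) = (\<Sum>x\<in>closed_walks N k. ?E x)"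
    unfolding trace_pow_toeplitz_mat using lengths \<open>1 \<le> k\<close>
    by (intro Bochner_Integration.integral_sum integrable_prod_toeplitz_coeff) auto
  also have "\<dots> = (\<Sum>x\<in>?R. ?E x)"
  proof (rule sum.mono_neutral_right)
    show "\<forall>x\<in>closed_walks N k - ?R. ?E x = 0"
    proof
      fix x assume "x \<in> closed_walks N k - ?R"
      then obtain t0 where "t0 < k" "\<And>t. t < k \<Longrightarrow> t \<noteq> t0 \<Longrightarrow> step_length x t \<noteq> step_length x t0"
        by (auto simp: repeated_steps_def)
      with lengths \<open>x \<in> closed_walks N k - ?R\<close> show "?E x = 0"
        by (intro integral_prod_toeplitz_coeff_eq_0) auto
    qed
  qed auto
  finally have "\<bar>\<integral>b. mat_trace (toeplitz_mat N b ^\<^sub>m k) \<partial>?P\<bar> \<le> (\<Sum>x\<in>?R. \<bar>?E x\<bar>)"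
    by (simp add: sum_abs)
  also have "\<dots> \<le> (\<Sum>x\<in>?R. k * (\<integral>y. \<bar>y\<bar> ^ k \<partial>M))"
    using lengths \<open>1 \<le> k\<close> by (intro sum_mono abs_integral_prod_toeplitz_coeff_le) auto
  also have "\<dots> = card ?R * (k * (\<integral>y. \<bar>y\<bar> ^ k \<partial>M))"
    by simp
  also have "\<dots> \<le> card {x \<in> walks N k. repeated_steps k x} * (k * (\<integral>y. \<bar>y\<bar> ^ k \<partial>M))"
    by (intro mult_right_mono) (auto simp: closed_walks_def intro!: card_mono)
  finally show ?thesis .
qed

lemma abs_scaled_expected_trace_odd_pow_le:
  assumes "1 \<le> N"
  shows "\<bar>\<integral>b. real N powr - (real (2 * m + 1) / 2 + 1) * mat_trace (toeplitz_mat N b ^\<^sub>m (2 * m + 1))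
      \<partial>PiM {1..N-1} (\<lambda>_. M)\<bar>
    \<le> 2 ^ (2 * m + 1) * real m ^ (2 * m + 1) * (real (2 * m + 1) * (\<integral>y. \<bar>y\<bar> ^ (2 * m + 1) \<partial>M))
        / sqrt N"
    (is "\<bar>\<integral>b. ?scale * ?trace b \<partial>?P\<bar> \<le> ?C / _")
proof -
  let ?k = "2 * m + 1"
  let ?c = "?k * (\<integral>y. \<bar>y\<bar> ^ ?k \<partial>M)"
  have card_le: "card {x \<in> walks N ?k. repeated_steps ?k x} \<le> N ^ (m + 1) * (2 ^ ?k * m ^ ?k)"
    using card_walks_repeated_steps_le[of N ?k] by (simp add: algebra_simps)
  have "\<bar>\<integral>b. ?trace b \<partial>?P\<bar> \<le> card {x \<in> walks N ?k. repeated_steps ?k x} * ?c"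
    by (rule abs_integral_trace_pow_toeplitz_mat_le) simp
  also have "\<dots> \<le> real (N ^ (m + 1) * (2 ^ ?k * m ^ ?k)) * ?c"
    using card_le by (intro mult_right_mono of_nat_mono) simp_all
  finally have "\<bar>\<integral>b. ?scale * ?trace b \<partial>?P\<bar> \<le> ?scale * (real (N ^ (m + 1) * (2 ^ ?k * m ^ ?k)) * ?c)"
    by (simp add: abs_mult mult_left_mono)
  also have "\<dots> = (?scale * real N ^ (m + 1)) * ?C"
    by simp
  also have "\<dots> = ?C / sqrt N"
    using powr_odd_scaling[of N m] \<open>1 \<le> N\<close> by simp
  finally show ?thesis .
qed

end

theorem mainTheorem2:
  fixes p :: "real \<Rightarrow> real"
  assumes p_meas: "p \<in> borel_measurable lborel"
    and p_nonneg: "\<And>x. 0 \<le> p x"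
    and p_prob: "(\<integral>\<^sup>+ x. ennreal (p x) \<partial>lborel) = 1"
    and p_moments: "\<And>k::nat. integrable lborel (\<lambda>x. \<bar>x\<bar> ^ k * p x)"
    and p_mean: "(\<integral>x. x * p x \<partial>lborel) = 0"
    and p_var: "(\<integral>x. x\<^sup>2 * p x \<partial>lborel) = 1"
  shows "\<forall>m::nat. (\<exists>C::real. \<forall>N::nat. N \<ge> 1 \<longrightarrow>
            \<bar>M_N p (2 * m + 1) N\<bar> \<le> C / sqrt (real N))
          \<and> (\<lambda>N. M_N p (2 * m + 1) N) \<longlonglongrightarrow> 0"
proof (intro allI conjI)
  fix m :: nat
  let ?k = "2 * m + 1" and ?M = "density lborel p"
  define C where "C = 2 ^ ?k * real m ^ ?k * (real ?k * (\<integral>y. \<bar>y\<bar> ^ ?k \<partial>?M))"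
  have "prob_space ?M"
    using p_meas p_prob by (intro prob_spaceI) (simp add: emeasure_density)
  moreover have "integrable ?M (\<lambda>y. \<bar>y\<bar> ^ n)" for n
    using p_moments[of n] p_meas p_nonneg by (subst integrable_density) (auto simp: mult.commute)
  moreover have "(\<integral>y. y \<partial>?M) = 0"
    using p_mean p_meas p_nonneg by (subst integral_density) (auto simp: mult.commute)
  ultimately have bound: "\<bar>M_N p ?k N\<bar> \<le> C / sqrt N" if "N \<ge> 1" for N
    unfolding C_def M_N_def M_AN_def entries_law_def
    using that by (intro abs_scaled_expected_trace_odd_pow_le) simp_all
  then show "\<exists>C. \<forall>N. N \<ge> 1 \<longrightarrow> \<bar>M_N p ?k N\<bar> \<le> C / sqrt N" by blast
  have "(\<lambda>N. C / sqrt (real N)) \<longlonglongrightarrow> 0" by real_asymp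
  then show "(\<lambda>N. M_N p ?k N) \<longlonglongrightarrow> 0"
    by (rule Lim_null_comparison[rotated]) (use bound in \<open>auto simp: eventually_sequentially\<close>)
qed

end
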